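(* Let $R$ be a finite commutative local Frobenius ring with residue field $\mathbb{F}_q$. For $i=1,2$, let $C_i$ be a non-free linear code of length $n$ over $R$, and suppose $C_1+C_2=R^n$. Then $C_1\cap C_2\neq\{\mathbf{0}\}$; that is, $\{C_1,C_2\}$ is an $\ell$-DLIP for some $\ell\neq 0$.
   Context: A linear code of length $n$ over $R$ is an $R$-submodule of $R^n$; it is free if it is a free $R$-module. $\dim(C):=\log_q|C|$, and a pair $\{C,D\}$ is an $\ell$-DLIP if $\dim(C\cap D)=\ell$. *)

theory Defs
  imports "HOL-Analysis.Analysis"
begin

definition ring_ideal :: "'a::comm_ring_1 set \<Rightarrow> bool" where
  "ring_ideal I \<longleftrightarrow> module.subspace ((*) :: 'a \<Rightarrow> 'a \<Rightarrow> 'a) I"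

definition maximal_ideal :: "'a::comm_ring_1 set \<Rightarrow> bool" where
  "maximal_ideal M \<longleftrightarrow> ring_ideal M \<and> M \<noteq> UNIV \<and>
     (\<forall>J. ring_ideal J \<and> M \<subseteq> J \<longrightarrow> J = M \<or> J = UNIV)"

definition minimal_ideal :: "'a::comm_ring_1 set \<Rightarrow> bool" where
  "minimal_ideal I \<longleftrightarrow> ring_ideal I \<and> I \<noteq> {0} \<and>
     (\<forall>J. ring_ideal J \<and> J \<subseteq> I \<longrightarrow> J = {0} \<or> J = I)"

definition local_ring :: "'a::comm_ring_1 itself \<Rightarrow> bool" where
  "local_ring _ \<longleftrightarrow> (\<exists>!M::'a set. maximal_ideal M)"

definition socle :: "'a::comm_ring_1 itself \<Rightarrow> 'a set" where
  "socle _ = module.span ((*) :: 'a \<Rightarrow> 'a \<Rightarrow> 'a) (\<Union>{I::'a set. minimal_ideal I})"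

text \<open>A finite commutative ring is Frobenius iff its socle is a principal ideal.\<close>
definition frobenius_ring :: "'a::comm_ring_1 itself \<Rightarrow> bool" where
  "frobenius_ring T \<longleftrightarrow> (\<exists>a::'a. socle T = {r * a | r. r \<in> UNIV})"

definition vscale :: "'a::comm_ring_1 \<Rightarrow> 'a ^ 'n \<Rightarrow> 'a ^ 'n" where
  "vscale r x = (\<chi> i. r * x $ i)"

definition linear_code :: "('a::comm_ring_1 ^ 'n) set \<Rightarrow> bool" where
  "linear_code C \<longleftrightarrow> module.subspace (vscale :: 'a \<Rightarrow> 'a ^ 'n \<Rightarrow> 'a ^ 'n) C"

definition free_code :: "('a::comm_ring_1 ^ 'n) set \<Rightarrow> bool" where
  "free_code C \<longleftrightarrow> (\<exists>B \<subseteq> C. \<not> module.dependent (vscale :: 'a \<Rightarrow> 'a ^ 'n \<Rightarrow> 'a ^ 'n) B \<and>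
                             module.span (vscale :: 'a \<Rightarrow> 'a ^ 'n \<Rightarrow> 'a ^ 'n) B = C)"

end

theory Submission
  imports Defs
begin

(* If C1 and C2 met only in 0, then R^n = C1 + C2 would be a direct sum, and a direct
   summand of a free module over a local ring is free.  For the latter, take a generating
   set B of C1 of least size.  The projection onto C1 along C2 provides linear coordinate
   functionals lam c with x = (SUM c:B. lam c x * c) on C1.  By minimality of B, every
   relation among the elements of B has nonunit coefficients, so the matrix (lam c b) is the
   identity modulo the maximal ideal.  A nonzero relation can be multiplied into a nonzero
   relation annihilated by the maximal ideal, and applying the lam c to it shows that it is
   zero.  Hence B is a basis. *)

interpretation vec_module: module "vscale :: 'a::comm_ring_1 \<Rightarrow> 'a ^ 'n \<Rightarrow> 'a ^ 'n"
  by unfold_locales (simp_all add: vscale_def vec_eq_iff algebra_simps)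

lemma vscale_eq_vector_scalar_mult: "vscale = (*s)"
  by (simp add: fun_eq_iff vscale_def vector_scalar_mult_def)

lemma vscale_nth [simp]: "vscale r x $ i = r * x $ i"
  by (simp add: vscale_def)

lemma ring_ideal_iff:
  "ring_ideal I \<longleftrightarrow> 0 \<in> I \<and> (\<forall>x\<in>I. \<forall>y\<in>I. x + y \<in> I) \<and> (\<forall>c. \<forall>x\<in>I. c * x \<in> I)"
proof -
  interpret module "(*) :: 'a \<Rightarrow> 'a \<Rightarrow> 'a"
    by unfold_locales (simp_all add: algebra_simps)
  show ?thesis
    unfolding ring_ideal_def subspace_def by simp
qed

lemma ring_ideal_principal: "ring_ideal (range (\<lambda>r. r * x))"
proof -
  have "0 = 0 * x" "a * x + b * x = (a + b) * x" "c * (a * x) = (c * a) * x" for a b c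
    by (simp_all add: algebra_simps)
  then show ?thesis
    unfolding ring_ideal_iff by blast
qed

lemma ring_ideal_eq_UNIV_iff:
  assumes "ring_ideal I"
  shows "I = UNIV \<longleftrightarrow> 1 \<in> I"
  using assms unfolding ring_ideal_iff by (metis UNIV_I UNIV_eq_I mult.right_neutral)

lemma principal_ideal_neq_UNIV:
  fixes x :: "'a::comm_ring_1"
  assumes "\<not> x dvd 1"
  shows "range (\<lambda>r. r * x) \<noteq> UNIV"
proof
  assume "range (\<lambda>r. r * x) = UNIV"
  then obtain r where "1 = r * x"
    by (metis UNIV_I imageE)
  with assms show False
    using dvd_triv_right[of x r] by simp
qed

lemma ex_maximal_ideal_superset:
  fixes I :: "'a::{comm_ring_1,finite} set"
  assumes "ring_ideal I" and "I \<noteq> UNIV"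
  obtains M where "maximal_ideal M" and "I \<subseteq> M"
proof -
  define S where "S = {J. ring_ideal J \<and> I \<subseteq> J \<and> J \<noteq> UNIV}"
  have "I \<in> S"
    using assms by (simp add: S_def)
  then obtain M where M: "M \<in> S" and M_max: "\<forall>J\<in>S. M \<le> J \<longrightarrow> M = J"
    using finite_has_maximal[of S] by auto
  have "maximal_ideal M"
    unfolding maximal_ideal_def
  proof (intro conjI allI impI)
    show "ring_ideal M" "M \<noteq> UNIV"
      using M by (simp_all add: S_def)
    fix J
    assume "ring_ideal J \<and> M \<subseteq> J"
    then show "J = M \<or> J = UNIV"
      using M M_max by (auto simp: S_def)
  qed
  moreover have "I \<subseteq> M"
    using M by (simp add: S_def)
  ultimately show thesis
    by (rule that)
qed

lemma ring_ideal_unit_eq_UNIV: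
  fixes x :: "'a::comm_ring_1"
  assumes "ring_ideal I" and "x \<in> I" and "x dvd 1"
  shows "I = UNIV"
proof -
  obtain k where "1 = x * k"
    using assms(3) by (rule dvdE)
  moreover have "k * x \<in> I"
    using assms(1,2) unfolding ring_ideal_iff by blast
  ultimately have "1 \<in> I"
    by (simp add: mult.commute)
  then show ?thesis
    using assms(1) ring_ideal_eq_UNIV_iff by blast
qed

lemma local_ring_maximal_ideal_eq_nonunits:
  assumes "local_ring TYPE('a::{comm_ring_1,finite})" and "maximal_ideal (M :: 'a set)"
  shows "M = {x. \<not> x dvd 1}"
proof -
  have "\<not> x dvd 1" if "x \<in> M" for x
    using assms(2) that ring_ideal_unit_eq_UNIV unfolding maximal_ideal_def by blast
  moreover have "x \<in> M" if nonunit: "\<not> x dvd 1" for x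
  proof -
    obtain N where "maximal_ideal N" and "range (\<lambda>r. r * x) \<subseteq> N"
      using ring_ideal_principal principal_ideal_neq_UNIV[OF nonunit]
      by (rule ex_maximal_ideal_superset)
    moreover have "N = M"
      using assms \<open>maximal_ideal N\<close> unfolding local_ring_def by blast
    ultimately show "x \<in> M"
      using rangeI[of "\<lambda>r. r * x" 1] by auto
  qed
  ultimately show ?thesis
    by auto
qed

lemma local_ring_nonunit_add:
  fixes x y :: "'a::{comm_ring_1,finite}"
  assumes "local_ring TYPE('a)" and "\<not> x dvd 1" and "\<not> y dvd 1"
  shows "\<not> (x + y) dvd 1"
proof -
  obtain M :: "'a set" where "maximal_ideal M"
    using assms(1) unfolding local_ring_def by blast
  then have M_eq: "M = {x. \<not> x dvd 1}" and "ring_ideal M"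
    using local_ring_maximal_ideal_eq_nonunits[OF assms(1)] maximal_ideal_def by blast+
  have "x + y \<in> M"
    using \<open>ring_ideal M\<close> assms(2,3) unfolding ring_ideal_iff M_eq by blast
  then show ?thesis
    using M_eq by blast
qed

lemma local_ring_unit_one_minus:
  fixes m :: "'a::{comm_ring_1,finite}"
  assumes "local_ring TYPE('a)" and "\<not> m dvd 1"
  shows "(1 - m) dvd 1"
  using local_ring_nonunit_add[OF assms(1) _ assms(2), of "1 - m"] by force

lemma local_ring_eq_nonunit_mult_imp_eq_0:
  fixes m x :: "'a::{comm_ring_1,finite}"
  assumes "local_ring TYPE('a)" and "\<not> m dvd 1" and "x = m * x"
  shows "x = 0"
proof -
  obtain g where g: "1 = (1 - m) * g"
    using local_ring_unit_one_minus[OF assms(1,2)] by (rule dvdE)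
  have "(1 - m) * x = 0"
    using assms(3) by (simp add: left_diff_distrib)
  have "x = ((1 - m) * g) * x"
    by (simp flip: g)
  also have "\<dots> = g * ((1 - m) * x)"
    by (simp add: ac_simps)
  finally show ?thesis
    using \<open>(1 - m) * x = 0\<close> by simp
qed

lemma local_ring_ex_multiple_annihilated_by_nonunits:
  fixes u :: "'b \<Rightarrow> 'a::{comm_ring_1,finite}"
  assumes local: "local_ring TYPE('a)" and "u \<noteq> (\<lambda>_. 0)"
  obtains r where "(\<lambda>b. r * u b) \<noteq> (\<lambda>_. 0)" and "\<And>m b. \<not> m dvd 1 \<Longrightarrow> m * (r * u b) = 0"
proof -
  define cyclic where "cyclic w = range (\<lambda>s. \<lambda>b. s * w b)" for w :: "'b \<Rightarrow> 'a"
  obtain r where r: "(\<lambda>b. r * u b) \<noteq> (\<lambda>_. 0)"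
    and r_min: "\<And>r'. (\<lambda>b. r' * u b) \<noteq> (\<lambda>_. 0) \<Longrightarrow>
                  card (cyclic (\<lambda>b. r * u b)) \<le> card (cyclic (\<lambda>b. r' * u b))"
    using ex_has_least_nat[of "\<lambda>r. (\<lambda>b. r * u b) \<noteq> (\<lambda>_. 0)" 1 "\<lambda>r. card (cyclic (\<lambda>b. r * u b))"]
      assms(2) by auto
  define w where "w = (\<lambda>b. r * u b)"
  have "m * w b = 0" if m: "\<not> m dvd 1" for m b
  proof (rule ccontr)
    assume "m * w b \<noteq> 0"
    then have mw: "(\<lambda>b. (m * r) * u b) \<noteq> (\<lambda>_. 0)"
      by (auto simp: w_def fun_eq_iff mult.assoc)
    have "cyclic (\<lambda>b. (m * r) * u b) \<subseteq> cyclic w"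
    proof
      fix f
      assume "f \<in> cyclic (\<lambda>b. (m * r) * u b)"
      then obtain s where "f = (\<lambda>b. s * (m * r * u b))"
        unfolding cyclic_def by blast
      also have "\<dots> = (\<lambda>b. (s * m) * w b)"
        by (simp add: w_def mult.assoc)
      finally show "f \<in> cyclic w"
        unfolding cyclic_def by blast
    qed
    moreover have "w \<notin> cyclic (\<lambda>b. (m * r) * u b)"
    proof
      assume "w \<in> cyclic (\<lambda>b. (m * r) * u b)"
      then obtain s where "w = (\<lambda>b. s * (m * r * u b))"
        unfolding cyclic_def by blast
      also have "\<dots> = (\<lambda>b. (s * m) * w b)"
        by (simp add: w_def mult.assoc)
      finally have w_fixed: "w = (\<lambda>b. (s * m) * w b)" .
      have "\<not> (s * m) dvd 1"
        using m dvd_mult_right by blast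
      then have "w b' = 0" for b'
        using local_ring_eq_nonunit_mult_imp_eq_0[OF local _ fun_cong[OF w_fixed, of b']] by simp
      then show False
        using r by (auto simp: w_def fun_eq_iff)
    qed
    moreover have "w \<in> cyclic w"
      unfolding cyclic_def using rangeI[of "\<lambda>s b. s * w b" 1] by simp
    ultimately have "card (cyclic (\<lambda>b. (m * r) * u b)) < card (cyclic w)"
      by (intro psubset_card_mono) (auto simp: cyclic_def)
    then show False
      using r_min[OF mw] by (simp add: w_def)
  qed
  with r show thesis
    using that by (simp add: w_def)
qed

lemma local_ring_near_identity_left_kernel_zero:
  fixes A :: "'b \<Rightarrow> 'b \<Rightarrow> 'a::{comm_ring_1,finite}"
  assumes local: "local_ring TYPE('a)" and "finite B"
    and near_id: "\<And>b c. b \<in> B \<Longrightarrow> c \<in> B \<Longrightarrow> \<not> (A b c - (if b = c then 1 else 0)) dvd 1"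
    and kernel: "\<And>c. c \<in> B \<Longrightarrow> (\<Sum>b\<in>B. u b * A b c) = 0"
    and "b \<in> B"
  shows "u b = 0"
proof (rule ccontr)
  assume "u b \<noteq> 0"
  define v where "v b = (if b \<in> B then u b else 0)" for b
  have "v \<noteq> (\<lambda>_. 0)"
    using \<open>u b \<noteq> 0\<close> \<open>b \<in> B\<close> by (auto simp: v_def fun_eq_iff)
  then obtain r where nz: "(\<lambda>b. r * v b) \<noteq> (\<lambda>_. 0)"
    and ann: "\<And>m b. \<not> m dvd 1 \<Longrightarrow> m * (r * v b) = 0"
    using local_ring_ex_multiple_annihilated_by_nonunits[OF local] by metis
  have "r * v c = 0" for c
  proof (cases "c \<in> B")
    case True
    have "r * v c = (\<Sum>b\<in>B. r * v b * (if b = c then 1 else 0))"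
      using \<open>finite B\<close> True by (simp add: if_distrib[of "\<lambda>x. _ * x"] cong: if_cong)
    also have "\<dots> = (\<Sum>b\<in>B. r * v b * A b c)"
    proof (rule sum.cong)
      fix b
      assume "b \<in> B"
      then have "(A b c - (if b = c then 1 else 0)) * (r * v b) = 0"
        using ann near_id True by blast
      then show "r * v b * (if b = c then 1 else 0) = r * v b * A b c"
        by (simp add: algebra_simps)
    qed simp
    also have "\<dots> = r * (\<Sum>b\<in>B. u b * A b c)"
      by (simp add: v_def sum_distrib_left mult.assoc)
    also have "\<dots> = 0"
      using kernel True by simp
    finally show ?thesis .
  qed (simp add: v_def)
  with nz show False
    by auto
qed

lemma (in module) span_delete_eq_if_unit_coefficient:
  assumes "finite B" and "(\<Sum>c\<in>B. scale (u c) c) = 0" and "b \<in> B" and "u b dvd 1"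
  shows "span (B - {b}) = span B"
proof -
  obtain w where "1 = u b * w"
    using assms(4) by (rule dvdE)
  then have w: "w * u b = 1"
    by (simp add: mult.commute)
  have u_b: "scale (u b) b = - (\<Sum>c\<in>B - {b}. scale (u c) c)"
    using assms(2) sum.remove[OF assms(1,3), of "\<lambda>c. scale (u c) c"]
    by (simp add: eq_neg_iff_add_eq_0)
  have "b = scale (w * u b) b"
    by (simp add: w)
  also have "\<dots> = - scale w (\<Sum>c\<in>B - {b}. scale (u c) c)"
    by (simp add: u_b flip: scale_scale)
  finally have b_eq: "b = - scale w (\<Sum>c\<in>B - {b}. scale (u c) c)" .
  have "- scale w (\<Sum>c\<in>B - {b}. scale (u c) c) \<in> span (B - {b})"
    by (intro span_neg span_scale span_sum span_base)
  then have "b \<in> span (B - {b})"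
    by (simp only: b_eq[symmetric])
  then have "B \<subseteq> span (B - {b})"
    using span_superset[of "B - {b}"] by auto
  moreover have "B - {b} \<subseteq> span B"
    using span_superset[of B] by auto
  ultimately show ?thesis
    by (simp add: span_eq)
qed

lemma (in module) nonunit_coefficient_if_minimal_spanning:
  assumes "finite B"
    and minimal: "\<And>B'. B' \<subseteq> B \<Longrightarrow> span B' = span B \<Longrightarrow> card B \<le> card B'"
    and "(\<Sum>c\<in>B. scale (u c) c) = 0" and "b \<in> B"
  shows "\<not> u b dvd 1"
proof
  assume "u b dvd 1"
  then have "card B \<le> card (B - {b})"
    using span_delete_eq_if_unit_coefficient[OF assms(1,3,4)] by (intro minimal) auto
  then show False
    using card_Diff1_less[OF assms(1,4)] by simp
qed

lemma independent_if_near_identity_coordinates: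
  fixes scale :: "'a::{comm_ring_1,finite} \<Rightarrow> 'b::ab_group_add \<Rightarrow> 'b"
    and lam :: "'b \<Rightarrow> 'b \<Rightarrow> 'a"
  assumes "module scale" and local: "local_ring TYPE('a)" and "finite B"
    and nonunit: "\<And>u b. (\<Sum>c\<in>B. scale (u c) c) = 0 \<Longrightarrow> b \<in> B \<Longrightarrow> \<not> u b dvd 1"
    and lam_combination: "\<And>c u. lam c (\<Sum>b\<in>B. scale (u b) b) = (\<Sum>b\<in>B. u b * lam c b)"
    and expand: "\<And>b. b \<in> B \<Longrightarrow> b = (\<Sum>c\<in>B. scale (lam c b) c)"
  shows "\<not> module.dependent scale B"
proof -
  interpret module scale
    by fact
  have near_id: "\<not> (lam c b - (if b = c then 1 else 0)) dvd 1" if "b \<in> B" and "c \<in> B" for b c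
  proof -
    have "(\<Sum>c\<in>B. scale (lam c b - (if b = c then 1 else 0)) c)
        = (\<Sum>c\<in>B. scale (lam c b) c) - (\<Sum>c\<in>B. if b = c then c else 0)"
      by (simp add: scale_left_diff_distrib sum_subtractf if_distrib[of "\<lambda>r. scale r _"] cong: if_cong)
    also have "\<dots> = b - b"
      using \<open>b \<in> B\<close> \<open>finite B\<close> by (simp flip: expand[OF \<open>b \<in> B\<close>])
    finally have "(\<Sum>c\<in>B. scale (lam c b - (if b = c then 1 else 0)) c) = 0"
      by simp
    from nonunit[OF this \<open>c \<in> B\<close>] show ?thesis .
  qed
  show ?thesis
  proof
    assume "dependent B"
    then obtain u v where "v \<in> B" "u v \<noteq> 0" and rel: "(\<Sum>b\<in>B. scale (u b) b) = 0"
      using dependent_finite[OF \<open>finite B\<close>] by blast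
    have kernel: "(\<Sum>b\<in>B. u b * lam c b) = 0" for c
    proof -
      have "(\<Sum>b\<in>B. u b * lam c b) = lam c (\<Sum>b\<in>B. scale 0 b)"
        using lam_combination[of c u] rel by simp
      also have "\<dots> = 0"
        by (simp only: lam_combination) simp
      finally show ?thesis .
    qed
    have "u v = 0"
      by (rule local_ring_near_identity_left_kernel_zero[where A = "\<lambda>b c. lam c b",
            OF local \<open>finite B\<close> near_id kernel \<open>v \<in> B\<close>])
    with \<open>u v \<noteq> 0\<close> show False ..
  qed
qed

lemma complemented_code_projection:
  fixes C D :: "('a::comm_ring_1 ^ 'n) set"
  assumes "linear_code C" and "linear_code D" and "C \<inter> D = {0}"
    and "{x + y | x y. x \<in> C \<and> y \<in> D} = UNIV"
  obtains P :: "'n \<Rightarrow> 'a ^ 'n"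
  where "\<And>i. P i \<in> C" and "\<And>x. x \<in> C \<Longrightarrow> x = (\<Sum>i\<in>UNIV. vscale (x $ i) (P i))"
proof -
  have C: "vec_module.subspace C" and D: "vec_module.subspace D"
    using assms(1,2) unfolding linear_code_def by auto
  have "\<exists>p q. p \<in> C \<and> q \<in> D \<and> axis i 1 = p + q" for i :: 'n
  proof -
    have "axis i 1 \<in> {x + y | x y. x \<in> C \<and> y \<in> D}"
      using assms(4) by simp
    then show ?thesis
      by blast
  qed
  then obtain P Q where PQ: "\<And>i. P i \<in> C" "\<And>i. Q i \<in> D" "\<And>i. axis i 1 = P i + Q i"
    by metis
  have "x = (\<Sum>i\<in>UNIV. vscale (x $ i) (P i))" if "x \<in> C" for x
  proof -
    define p q where "p = (\<Sum>i\<in>UNIV. vscale (x $ i) (P i))" and "q = (\<Sum>i\<in>UNIV. vscale (x $ i) (Q i))"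
    have "x = (\<Sum>i\<in>UNIV. vscale (x $ i) (axis i 1))"
      by (simp add: vscale_eq_vector_scalar_mult basis_expansion)
    also have "\<dots> = p + q"
      by (simp add: p_def q_def PQ(3) vec_module.scale_right_distrib sum.distrib)
    finally have "x = p + q" .
    have "p \<in> C"
      unfolding p_def using PQ(1) by (intro vec_module.subspace_sum[OF C] vec_module.subspace_scale[OF C])
    then have "q \<in> C"
      using vec_module.subspace_diff[OF C \<open>x \<in> C\<close> \<open>p \<in> C\<close>] \<open>x = p + q\<close> by simp
    moreover have "q \<in> D"
      unfolding q_def using PQ(2) by (intro vec_module.subspace_sum[OF D] vec_module.subspace_scale[OF D])
    ultimately have "q = 0"
      using assms(3) by blast
    with \<open>x = p + q\<close> show ?thesis
      by (simp add: p_def)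
  qed
  with PQ(1) show thesis
    by (rule that)
qed

lemma complemented_code_coordinates:
  fixes C D :: "('a::comm_ring_1 ^ 'n) set"
  assumes "linear_code C" and "linear_code D" and "C \<inter> D = {0}"
    and "{x + y | x y. x \<in> C \<and> y \<in> D} = UNIV"
    and "finite B" and "vec_module.span B = C"
  obtains coef :: "'n \<Rightarrow> 'a ^ 'n \<Rightarrow> 'a"
  where "\<And>x. x \<in> C \<Longrightarrow> x = (\<Sum>b\<in>B. vscale (\<Sum>i\<in>UNIV. x $ i * coef i b) b)"
proof -
  obtain P where P: "\<And>i. P i \<in> C"
    and expand: "\<And>x. x \<in> C \<Longrightarrow> x = (\<Sum>i\<in>UNIV. vscale (x $ i) (P i))"
    using complemented_code_projection[OF assms(1-4)] by metis
  have "\<exists>c. P i = (\<Sum>b\<in>B. vscale (c b) b)" for i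
    using P[of i] assms(6) vec_module.span_finite[OF assms(5)] by auto
  then obtain coef where coef: "\<And>i. P i = (\<Sum>b\<in>B. vscale (coef i b) b)"
    by metis
  have "x = (\<Sum>b\<in>B. vscale (\<Sum>i\<in>UNIV. x $ i * coef i b) b)" if "x \<in> C" for x
  proof -
    have "x = (\<Sum>i\<in>UNIV. vscale (x $ i) (P i))"
      using that by (rule expand)
    also have "\<dots> = (\<Sum>i\<in>UNIV. \<Sum>b\<in>B. vscale (x $ i * coef i b) b)"
      by (simp add: coef vec_module.scale_sum_right)
    also have "\<dots> = (\<Sum>b\<in>B. \<Sum>i\<in>UNIV. vscale (x $ i * coef i b) b)"
      by (rule sum.swap)
    also have "\<dots> = (\<Sum>b\<in>B. vscale (\<Sum>i\<in>UNIV. x $ i * coef i b) b)"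
      by (simp add: vec_module.scale_sum_left)
    finally show ?thesis .
  qed
  then show thesis
    by (rule that)
qed

lemma free_code_if_complemented:
  fixes C D :: "('a::{comm_ring_1,finite} ^ 'n) set"
  assumes local: "local_ring TYPE('a)"
    and codes: "linear_code C" "linear_code D"
    and direct: "C \<inter> D = {0}" "{x + y | x y. x \<in> C \<and> y \<in> D} = UNIV"
  shows "free_code C"
proof -
  have "vec_module.span C = C"
    using codes(1) unfolding linear_code_def by (simp add: vec_module.span_eq_iff)
  then obtain B where B: "B \<subseteq> C" "vec_module.span B = C"
    and B_min: "\<And>B'. B' \<subseteq> C \<Longrightarrow> vec_module.span B' = C \<Longrightarrow> card B \<le> card B'"
    using ex_has_least_nat[of "\<lambda>B. B \<subseteq> C \<and> vec_module.span B = C" C card] by auto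
  have "finite B"
    by simp
  have nonunit: "\<not> u b dvd 1" if "(\<Sum>c\<in>B. vscale (u c) c) = 0" and "b \<in> B" for u b
  proof (rule vec_module.nonunit_coefficient_if_minimal_spanning[OF \<open>finite B\<close> _ that])
    show "card B \<le> card B'" if "B' \<subseteq> B" and "vec_module.span B' = vec_module.span B" for B'
      using that B by (intro B_min) auto
  qed
  obtain coef where coef: "\<And>x. x \<in> C \<Longrightarrow> x = (\<Sum>b\<in>B. vscale (\<Sum>i\<in>UNIV. x $ i * coef i b) b)"
    using complemented_code_coordinates[OF codes direct \<open>finite B\<close> B(2)] by blast
  define lam where "lam c x = (\<Sum>i\<in>UNIV. x $ i * coef i c)" for c x
  have lam_combination: "lam c (\<Sum>b\<in>B. vscale (v b) b) = (\<Sum>b\<in>B. v b * lam c b)" for c v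
  proof -
    have "lam c (\<Sum>b\<in>B. vscale (v b) b) = (\<Sum>i\<in>UNIV. \<Sum>b\<in>B. v b * (b $ i * coef i c))"
      by (simp add: lam_def sum_component sum_distrib_right mult.assoc)
    also have "\<dots> = (\<Sum>b\<in>B. \<Sum>i\<in>UNIV. v b * (b $ i * coef i c))"
      by (rule sum.swap)
    finally show ?thesis
      by (simp add: lam_def sum_distrib_left)
  qed
  have expand: "b = (\<Sum>c\<in>B. vscale (lam c b) c)" if "b \<in> B" for b
    unfolding lam_def using B(1) that by (intro coef) auto
  have "vec_module.independent B"
    using vec_module.module_axioms local \<open>finite B\<close> nonunit lam_combination expand
    by (rule independent_if_near_identity_coordinates)
  with B show ?thesis
    unfolding free_code_def by blast
qed

theorem theorem3p16:
  fixes C1 C2 :: "('a::{comm_ring_1, finite} ^ 'n) set"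
  assumes "local_ring TYPE('a)"
    and "frobenius_ring TYPE('a)"
    and "linear_code C1" and "\<not> free_code C1"
    and "linear_code C2" and "\<not> free_code C2"
    and "{x + y | x y. x \<in> C1 \<and> y \<in> C2} = UNIV"
  shows "C1 \<inter> C2 \<noteq> {0}"
  using free_code_if_complemented[OF assms(1,3,5) _ assms(7)] assms(4) by blast

end
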